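(* Let $\mathcal H=\{H_1,\dots,H_n\}$ be oriented affine hyperplanes in $\mathbb R^d$ and $X\subseteq\mathbb R^d$ such that $(\mathcal H,X)$ is a stable arrangement. Then every nonempty atom $A_\sigma$ ($\sigma\subseteq[n]$) of the cover $\{H_i^+\cap X\}_{i\in[n]}$ of $X$ has nonempty interior.
   Context: An oriented affine hyperplane is $H_i=\{x:w_i\cdot x-h_i=0\}$ with $w_i\in\mathbb R^d\setminus\{0\}$, $h_i\in\mathbb R$, and $H_i^+=\{w_i\cdot x-h_i>0\}$, $H_i^-=\{w_i\cdot x-h_i<0\}$. The atom of $\sigma\subseteq[n]$ is $A_\sigma=\bigl(\bigcap_{i\in\sigma}(H_i^+\cap X)\bigr)\setminus\bigcup_{j\notin\sigma}H_j^+$, with $A_\emptyset=X\setminus\bigcup_iH_i^+$. $(\mathcal H,X)$ is stable if $X$ is open and convex and for every $\sigma\subseteq[n]$ with $X\cap\bigcap_{i\in\sigma}H_i\neq\emptyset$, the affine subspace $\bigcap_{i\in\sigma}H_i$ has dimension $d-|\sigma|$. *)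

theory Defs
  imports "HOL-Analysis.Analysis"
begin

definition hyp :: "(nat \<Rightarrow> 'a::euclidean_space) \<Rightarrow> (nat \<Rightarrow> real) \<Rightarrow> nat \<Rightarrow> 'a set" where
  "hyp w h i = {x. w i \<bullet> x - h i = 0}"

definition hyp_pos :: "(nat \<Rightarrow> 'a::euclidean_space) \<Rightarrow> (nat \<Rightarrow> real) \<Rightarrow> nat \<Rightarrow> 'a set" where
  "hyp_pos w h i = {x. w i \<bullet> x - h i > 0}"

definition hyp_neg :: "(nat \<Rightarrow> 'a::euclidean_space) \<Rightarrow> (nat \<Rightarrow> real) \<Rightarrow> nat \<Rightarrow> 'a set" where
  "hyp_neg w h i = {x. w i \<bullet> x - h i < 0}"

text \<open>Atom of \<sigma> \<subseteq> [n] of the cover {H_i^+ \<inter> X}. Intersecting with X also covers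
  the case \<sigma> = {} where A_{} = X minus the union of all H_i^+.\<close>

definition atom :: "nat \<Rightarrow> (nat \<Rightarrow> 'a::euclidean_space) \<Rightarrow> (nat \<Rightarrow> real) \<Rightarrow> 'a set \<Rightarrow> nat set \<Rightarrow> 'a set" where
  "atom n w h X \<sigma> = (X \<inter> (\<Inter>i\<in>\<sigma>. hyp_pos w h i \<inter> X)) - (\<Union>j\<in>{1..n} - \<sigma>. hyp_pos w h j)"

definition stable :: "nat \<Rightarrow> (nat \<Rightarrow> 'a::euclidean_space) \<Rightarrow> (nat \<Rightarrow> real) \<Rightarrow> 'a set \<Rightarrow> bool" where
  "stable n w h X \<longleftrightarrow> open X \<and> convex X \<and>
     (\<forall>\<sigma>. \<sigma> \<subseteq> {1..n} \<longrightarrow> X \<inter> (\<Inter>i\<in>\<sigma>. hyp w h i) \<noteq> {} \<longrightarrow>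
        aff_dim (\<Inter>i\<in>\<sigma>. hyp w h i) = int DIM('a) - int (card \<sigma>))"

end

theory Submission
  imports Defs
begin

text \<open>Let x be a point of the atom. The hyperplanes not in \<sigma> that pass through x have
  linearly independent normals by stability, so some direction v decreases all of them at
  once. Moving from x a little along v makes every defining inequality of the atom strict,
  and the set where all of them are strict is open and contained in the atom.\<close>

lemma exists_inner_eq_of_separating:
  fixes w :: "'i \<Rightarrow> 'a::real_inner"
  assumes "finite T"
    and sep: "\<And>j. j \<in> T \<Longrightarrow> \<exists>u. w j \<bullet> u \<noteq> 0 \<and> (\<forall>k\<in>T - {j}. w k \<bullet> u = 0)"
  shows "\<exists>v. \<forall>j\<in>T. w j \<bullet> v = c j"
proof -
  obtain u where u: "\<And>j. j \<in> T \<Longrightarrow> w j \<bullet> u j = 1 \<and> (\<forall>k\<in>T - {j}. w k \<bullet> u j = 0)"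
  proof -
    have "\<forall>j\<in>T. \<exists>u. w j \<bullet> u = 1 \<and> (\<forall>k\<in>T - {j}. w k \<bullet> u = 0)"
    proof
      fix j assume "j \<in> T"
      then obtain u where "w j \<bullet> u \<noteq> 0" "\<forall>k\<in>T - {j}. w k \<bullet> u = 0" using sep by blast
      then show "\<exists>u. w j \<bullet> u = 1 \<and> (\<forall>k\<in>T - {j}. w k \<bullet> u = 0)"
        by (intro exI[of _ "(1 / (w j \<bullet> u)) *\<^sub>R u"]) simp
    qed
    then show thesis using that by metis
  qed
  have "w k \<bullet> (\<Sum>j\<in>T. c j *\<^sub>R u j) = c k" if "k \<in> T" for k
  proof -
    have "w k \<bullet> (\<Sum>j\<in>T. c j *\<^sub>R u j) = (\<Sum>j\<in>T. c j * (w k \<bullet> u j))"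
      by (simp add: inner_sum_right)
    also have "\<dots> = c k * (w k \<bullet> u k) + (\<Sum>j\<in>T - {k}. c j * (w k \<bullet> u j))"
      using \<open>finite T\<close> \<open>k \<in> T\<close> by (simp add: sum.remove)
    also have "(\<Sum>j\<in>T - {k}. c j * (w k \<bullet> u j)) = 0"
      using u \<open>k \<in> T\<close> by (intro sum.neutral) auto
    finally show ?thesis using u \<open>k \<in> T\<close> by simp
  qed
  then show ?thesis by blast
qed

lemma stable_Inter_hyp_Diff_not_subset:
  fixes w :: "nat \<Rightarrow> 'a::euclidean_space"
  assumes st: "stable n w h X" and T: "T \<subseteq> {1..n}" and "j \<in> T"
    and x: "x \<in> X" "\<forall>k\<in>T. x \<in> hyp w h k"
  shows "\<exists>y\<in>(\<Inter>k\<in>T - {j}. hyp w h k). y \<notin> hyp w h j"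
proof -
  have "finite T" using T finite_subset by blast
  have "aff_dim (\<Inter>k\<in>T - {j}. hyp w h k) = int DIM('a) - int (card (T - {j}))"
    "aff_dim (\<Inter>k\<in>T. hyp w h k) = int DIM('a) - int (card T)"
    using st T x unfolding stable_def by (blast, blast)
  moreover have "card (T - {j}) \<noteq> card T"
    using \<open>finite T\<close> \<open>j \<in> T\<close> by (metis card_Diff1_less_iff less_irrefl)
  ultimately have "(\<Inter>k\<in>T - {j}. hyp w h k) \<noteq> (\<Inter>k\<in>T. hyp w h k)" by auto
  moreover have "(\<Inter>k\<in>T. hyp w h k) = (\<Inter>k\<in>T - {j}. hyp w h k) \<inter> hyp w h j"
    using \<open>j \<in> T\<close> by blast
  ultimately show ?thesis by blast
qed

lemma stable_exists_common_direction:
  fixes w :: "nat \<Rightarrow> 'a::euclidean_space"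
  assumes st: "stable n w h X" and T: "T \<subseteq> {1..n}"
    and x: "x \<in> X" "\<forall>k\<in>T. x \<in> hyp w h k"
  shows "\<exists>v. \<forall>j\<in>T. w j \<bullet> v = c j"
proof (rule exists_inner_eq_of_separating)
  show "finite T" using T finite_subset by blast
next
  fix j assume "j \<in> T"
  then obtain y where y: "y \<in> (\<Inter>k\<in>T - {j}. hyp w h k)" "y \<notin> hyp w h j"
    using stable_Inter_hyp_Diff_not_subset[OF st T _ x] by blast
  then show "\<exists>u. w j \<bullet> u \<noteq> 0 \<and> (\<forall>k\<in>T - {j}. w k \<bullet> u = 0)"
    using x \<open>j \<in> T\<close>
    by (intro exI[of _ "y - x"]) (auto simp: hyp_def inner_diff_right)
qed

lemma eventually_inner_ray_less:
  fixes a x v :: "'a::real_inner"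
  assumes "a \<bullet> x \<le> b" and "a \<bullet> x = b \<Longrightarrow> a \<bullet> v < 0"
  shows "\<forall>\<^sub>F t in at_right (0::real). a \<bullet> (x + t *\<^sub>R v) < b"
proof (cases "a \<bullet> x = b")
  case True
  with assms(2) show ?thesis
    using eventually_at_right_less[of "0::real"]
    by (elim eventually_mono) (simp add: inner_add_right mult_pos_neg)
next
  case False
  have "((\<lambda>t. a \<bullet> (x + t *\<^sub>R v)) \<longlongrightarrow> a \<bullet> (x + 0 *\<^sub>R v)) (at_right (0::real))"
    by (intro tendsto_intros)
  moreover have "a \<bullet> (x + 0 *\<^sub>R v) < b" using assms(1) False by simp
  ultimately show ?thesis by (rule order_tendstoD(2))
qed

definition open_atom :: "nat \<Rightarrow> (nat \<Rightarrow> 'a::euclidean_space) \<Rightarrow> (nat \<Rightarrow> real) \<Rightarrow> 'a set \<Rightarrow> nat set \<Rightarrow> 'a set" where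
  "open_atom n w h X \<sigma> = X \<inter> (\<Inter>i\<in>\<sigma>. hyp_pos w h i) \<inter> (\<Inter>j\<in>{1..n} - \<sigma>. hyp_neg w h j)"

lemma open_open_atom:
  assumes "open X" and "finite \<sigma>"
  shows "open (open_atom n w h X \<sigma>)"
  unfolding open_atom_def hyp_pos_def hyp_neg_def
  using assms by (intro open_Int open_INT finite_Diff finite_atLeastAtMost ballI
      open_Collect_less continuous_intros) auto

lemma open_atom_subset_atom: "open_atom n w h X \<sigma> \<subseteq> atom n w h X \<sigma>"
  unfolding open_atom_def atom_def hyp_pos_def hyp_neg_def by force

lemma stable_open_atom_nonempty:
  fixes w :: "nat \<Rightarrow> 'a::euclidean_space"
  assumes st: "stable n w h X" and x: "x \<in> atom n w h X \<sigma>" and "finite \<sigma>"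
  shows "open_atom n w h X \<sigma> \<noteq> {}"
proof -
  define T where "T = {j \<in> {1..n} - \<sigma>. x \<in> hyp w h j}"
  have "x \<in> X" "open X" using x st unfolding atom_def stable_def by auto
  obtain v where v: "\<forall>j\<in>T. w j \<bullet> v = -1"
    using stable_exists_common_direction[OF st _ \<open>x \<in> X\<close>, of T "\<lambda>_. -1"]
    unfolding T_def by blast
  have "((\<lambda>t. x + t *\<^sub>R v) \<longlongrightarrow> x + 0 *\<^sub>R v) (at_right (0::real))"
    by (intro tendsto_intros)
  then have in_X: "\<forall>\<^sub>F t in at_right (0::real). x + t *\<^sub>R v \<in> X"
    using topological_tendstoD \<open>open X\<close> \<open>x \<in> X\<close> by fastforce
  have x_pos: "\<forall>i\<in>\<sigma>. h i < w i \<bullet> x"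
  proof
    fix i assume "i \<in> \<sigma>"
    with x have "x \<in> hyp_pos w h i" unfolding atom_def by blast
    then show "h i < w i \<bullet> x" by (simp add: hyp_pos_def)
  qed
  have pos: "\<forall>\<^sub>F t in at_right (0::real). \<forall>i\<in>\<sigma>. (- w i) \<bullet> (x + t *\<^sub>R v) < - h i"
  proof (intro eventually_ball_finite[OF \<open>finite \<sigma>\<close>] ballI eventually_inner_ray_less)
    fix i assume "i \<in> \<sigma>"
    then have "h i < w i \<bullet> x" using x_pos by blast
    then show "(- w i) \<bullet> x \<le> - h i" and "(- w i) \<bullet> x = - h i \<Longrightarrow> (- w i) \<bullet> v < 0"
      by simp_all
  qed
  have x_nonpos: "\<forall>j\<in>{1..n} - \<sigma>. w j \<bullet> x \<le> h j"
    using x unfolding atom_def hyp_pos_def by force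
  have neg: "\<forall>\<^sub>F t in at_right (0::real). \<forall>j\<in>{1..n} - \<sigma>. w j \<bullet> (x + t *\<^sub>R v) < h j"
    using x_nonpos v
    by (intro eventually_ball_finite ballI eventually_inner_ray_less) (auto simp: hyp_def T_def)
  have "\<forall>\<^sub>F t in at_right (0::real). x + t *\<^sub>R v \<in> open_atom n w h X \<sigma>"
    using in_X pos neg
    by eventually_elim (auto simp: open_atom_def hyp_pos_def hyp_neg_def)
  then show ?thesis
    using eventually_happens trivial_limit_at_right_real by blast
qed

theorem lemma2p4:
  fixes n :: nat and w :: "nat \<Rightarrow> 'a::euclidean_space" and h :: "nat \<Rightarrow> real" and X :: "'a set"
    and \<sigma> :: "nat set"
  assumes "\<forall>i\<in>{1..n}. w i \<noteq> 0"
    and "stable n w h X"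
    and "\<sigma> \<subseteq> {1..n}"
    and "atom n w h X \<sigma> \<noteq> {}"
  shows "interior (atom n w h X \<sigma>) \<noteq> {}"
proof -
  have "finite \<sigma>" using assms(3) finite_subset by blast
  have "open X" using assms(2) unfolding stable_def by blast
  obtain x where "x \<in> atom n w h X \<sigma>" using assms(4) by blast
  have "open_atom n w h X \<sigma> \<subseteq> interior (atom n w h X \<sigma>)"
    using open_open_atom[OF \<open>open X\<close> \<open>finite \<sigma>\<close>] open_atom_subset_atom
    by (rule interior_maximal[rotated])
  moreover have "open_atom n w h X \<sigma> \<noteq> {}"
    using stable_open_atom_nonempty[OF assms(2) \<open>x \<in> atom n w h X \<sigma>\<close> \<open>finite \<sigma>\<close>] .
  ultimately show ?thesis by blast
qed

end
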